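(* The distribution of the rescaled magnetization under the Gibbs measure satisfies $$\mu_{N,\beta,\alpha}\Big(\sqrt{\tfrac{N}{s_N}}\,m\in\cdot\Big)\star\mathcal{N}(0,A^{-1})=z_N^{-1}\exp\Big\{-\tfrac{N}{s_N}\varphi_N\Big(\sqrt{\tfrac{s_N}{N}}\,x\Big)\Big\}\,\mathrm{d}^{s_N}x,$$ where $\star$ denotes convolution, $$\varphi_N(x)=\tfrac12x^TAx-\sum_{k=1}^{s_N}\log\cosh(x^TAe_k)=\tfrac{\beta}{2}\sum_{k}x_k^2+\tfrac{\alpha}{2}\sum_k x_k(x_{k-1}+x_{k+1})-\sum_k\log\cosh\big(\beta x_k+\alpha(x_{k-1}+x_{k+1})\big),$$ and $z_N=\int_{\mathbb{R}^{s_N}}\exp\{-\frac{N}{s_N}\varphi_N(\sqrt{s_N/N}\,x)\}\,\mathrm{d}^{s_N}x$.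
   Context: Parameters $\beta>2\alpha>0$. Let $(s_N)$ be a non-decreasing sequence of positive integers with $s_N$ dividing $N$; $\{1,\dots,N\}$ is partitioned into blocks $S_1,\dots,S_{s_N}$ of size $N/s_N$, block indices cyclic ($x_0=x_{s_N}$, $x_{s_N+1}=x_1$). For $\sigma\in\{-1,+1\}^N$, $m_k=\frac{s_N}{N}\sum_{i\in S_k}\sigma_i$, $m=(m_1,\dots,m_{s_N})$. $A=\beta I+\alpha(P+P^T)$ with $P$ the $s_N\times s_N$ cyclic shift matrix (positive definite since $\beta>2\alpha$), and $e_k$ the standard basis vectors of $\mathbb{R}^{s_N}$. The Gibbs measure is $\mu_{N,\beta,\alpha}(\sigma)=Z_{N,\beta,\alpha}^{-1}\exp\{\frac{N}{2s_N}m^TAm\}2^{-N}$ on $\{-1,+1\}^N$. *)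

theory Defs
  imports "HOL-Probability.Probability"
begin

text \<open>Conventions: spins are indexed 0..N-1, blocks 0..s-1; spin i lies in block
  i div (N div s). Vectors of R^s are functions nat => real on the index set {0..<s},
  the space R^s with Lebesgue measure is the product measure PiM {0..<s} (%_. lborel).\<close>

definition Rn :: "nat \<Rightarrow> (nat \<Rightarrow> real) measure" where
  "Rn s = PiM {0..<s} (\<lambda>_. lborel)"

text \<open>The matrix A = beta I + alpha (P + P^T), P the s x s cyclic shift.\<close>
definition Amat :: "real \<Rightarrow> real \<Rightarrow> nat \<Rightarrow> nat \<Rightarrow> nat \<Rightarrow> real" where
  "Amat \<beta> \<alpha> s i j =
     \<beta> * (if i = j then 1 else 0)
     + \<alpha> * ((if j = Suc i mod s then 1 else 0) + (if i = Suc j mod s then 1 else 0))"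

definition quadA :: "real \<Rightarrow> real \<Rightarrow> nat \<Rightarrow> (nat \<Rightarrow> real) \<Rightarrow> real" where
  "quadA \<beta> \<alpha> s x = (\<Sum>i<s. \<Sum>j<s. x i * Amat \<beta> \<alpha> s i j * x j)"

definition Acol :: "real \<Rightarrow> real \<Rightarrow> nat \<Rightarrow> (nat \<Rightarrow> real) \<Rightarrow> nat \<Rightarrow> real" where
  "Acol \<beta> \<alpha> s x k = (\<Sum>i<s. x i * Amat \<beta> \<alpha> s i k)"

definition phiN :: "real \<Rightarrow> real \<Rightarrow> nat \<Rightarrow> (nat \<Rightarrow> real) \<Rightarrow> real" where
  "phiN \<beta> \<alpha> s x = quadA \<beta> \<alpha> s x / 2 - (\<Sum>k<s. ln (cosh (Acol \<beta> \<alpha> s x k)))"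

definition spins :: "nat \<Rightarrow> (nat \<Rightarrow> real) set" where
  "spins N = PiE {0..<N} (\<lambda>_. {-1, 1})"

definition magn :: "nat \<Rightarrow> nat \<Rightarrow> (nat \<Rightarrow> real) \<Rightarrow> nat \<Rightarrow> real" where
  "magn N s \<sigma> k = (real s / real N) * (\<Sum>i\<in>{i. i < N \<and> i div (N div s) = k}. \<sigma> i)"

definition gibbs_weight :: "real \<Rightarrow> real \<Rightarrow> nat \<Rightarrow> nat \<Rightarrow> (nat \<Rightarrow> real) \<Rightarrow> real" where
  "gibbs_weight \<beta> \<alpha> N s \<sigma> =
     exp (real N / (2 * real s) * quadA \<beta> \<alpha> s (magn N s \<sigma>)) * 2 powr (- real N)"

definition gibbs_Z :: "real \<Rightarrow> real \<Rightarrow> nat \<Rightarrow> nat \<Rightarrow> real" where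
  "gibbs_Z \<beta> \<alpha> N s = (\<Sum>\<sigma>\<in>spins N. gibbs_weight \<beta> \<alpha> N s \<sigma>)"

definition gibbs :: "real \<Rightarrow> real \<Rightarrow> nat \<Rightarrow> nat \<Rightarrow> (nat \<Rightarrow> real) measure" where
  "gibbs \<beta> \<alpha> N s = density (count_space (spins N))
      (\<lambda>\<sigma>. ennreal (gibbs_weight \<beta> \<alpha> N s \<sigma> / gibbs_Z \<beta> \<alpha> N s))"

definition magn_law :: "real \<Rightarrow> real \<Rightarrow> nat \<Rightarrow> nat \<Rightarrow> (nat \<Rightarrow> real) measure" where
  "magn_law \<beta> \<alpha> N s = distr (gibbs \<beta> \<alpha> N s) (Rn s)
      (\<lambda>\<sigma>. \<lambda>k\<in>{0..<s}. sqrt (real N / real s) * magn N s \<sigma> k)"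

definition gauss :: "real \<Rightarrow> real \<Rightarrow> nat \<Rightarrow> (nat \<Rightarrow> real) measure" where
  "gauss \<beta> \<alpha> s = density (Rn s)
      (\<lambda>x. ennreal (exp (- quadA \<beta> \<alpha> s x / 2)
                    / (\<integral>y. exp (- quadA \<beta> \<alpha> s y / 2) \<partial>Rn s)))"

definition conv :: "nat \<Rightarrow> (nat \<Rightarrow> real) measure \<Rightarrow> (nat \<Rightarrow> real) measure \<Rightarrow> (nat \<Rightarrow> real) measure" where
  "conv s M1 M2 = distr (M1 \<Otimes>\<^sub>M M2) (Rn s) (\<lambda>(x, y). \<lambda>i\<in>{0..<s}. x i + y i)"

definition zN :: "real \<Rightarrow> real \<Rightarrow> nat \<Rightarrow> nat \<Rightarrow> real" where
  "zN \<beta> \<alpha> N s = (\<integral>x. exp (- (real N / real s) *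
        phiN \<beta> \<alpha> s (\<lambda>k. sqrt (real s / real N) * x k)) \<partial>Rn s)"

end

(*
  Write g for the Gaussian density of N(0, A^-1) and Y(sigma) = sqrt (N/s) m(sigma).  Convolving
  the law of Y with N(0, A^-1) gives the density  x |-> sum_sigma mu(sigma) g(x - Y(sigma)).
  Expanding the quadratic form in g(x - Y(sigma)), the Gibbs weight exp ((N/2s) m^T A m) cancels
  the term quadratic in m, exp (- x^T A x / 2) does not depend on sigma, and the cross term
  x^T A Y(sigma) is linear in the spins.  Summing out the independent spins block by block
  turns it into prod_k cosh (sqrt (s/N) x^T A e_k)^(N/s), so the density is proportional to
  exp (- (N/s) phi_N (sqrt (s/N) x)).  The convolution of two probability measures is a
  probability measure, which identifies the normalising constant with z_N.
*)

theory Submission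
  imports Defs
begin

section \<open>The quadratic form\<close>

lemma Amat_sym: "Amat b a s i j = Amat b a s j i"
  unfolding Amat_def by auto

lemma quadA_cong: "(\<And>i. i < s \<Longrightarrow> x i = y i) \<Longrightarrow> quadA b a s x = quadA b a s y"
  unfolding quadA_def by (intro sum.cong refl) auto

lemma quadA_scale: "quadA b a s (\<lambda>i. r * x i) = r\<^sup>2 * quadA b a s x"
  unfolding quadA_def by (simp add: sum_distrib_left power2_eq_square algebra_simps)

lemma Acol_scale: "Acol b a s (\<lambda>i. r * x i) k = r * Acol b a s x k"
  unfolding Acol_def by (simp add: sum_distrib_left algebra_simps)

lemma quadA_diff:
  "quadA b a s (\<lambda>i. x i - y i) = quadA b a s x - 2 * (\<Sum>k<s. Acol b a s x k * y k) + quadA b a s y"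
proof -
  let ?A = "Amat b a s"
  have "(\<Sum>i<s. \<Sum>j<s. y i * ?A i j * x j) = (\<Sum>i<s. \<Sum>j<s. x i * ?A i j * y j)"
    by (subst sum.swap) (simp add: Amat_sym mult_ac)
  moreover have "(\<Sum>k<s. Acol b a s x k * y k) = (\<Sum>i<s. \<Sum>j<s. x i * ?A i j * y j)"
    unfolding Acol_def by (subst sum.swap) (simp add: sum_distrib_right)
  ultimately show ?thesis
    unfolding quadA_def by (simp add: sum_subtractf sum.distrib algebra_simps)
qed

lemma sum_Suc_mod:
  fixes h :: "nat \<Rightarrow> 'a::comm_monoid_add"
  assumes "0 < s"
  shows "(\<Sum>i<s. h (Suc i mod s)) = (\<Sum>i<s. h i)"
proof -
  have inj: "inj_on (\<lambda>i. Suc i mod s) {..<s}"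
    unfolding inj_on_def by (auto simp: mod_Suc split: if_splits)
  moreover have "(\<lambda>i. Suc i mod s) ` {..<s} = {..<s}"
    using assms by (intro endo_inj_surj inj) auto
  ultimately show ?thesis
    using sum.reindex[OF inj, of h] by simp
qed

lemma quadA_cyclic:
  assumes "0 < s"
  shows "quadA b a s x = b * (\<Sum>i<s. x i * x i) + 2 * a * (\<Sum>i<s. x i * x (Suc i mod s))"
proof -
  have row: "(\<Sum>j<s. x i * Amat b a s i j * x j) =
      b * (x i * x i) + a * (x i * x (Suc i mod s)) + a * (\<Sum>j<s. if i = Suc j mod s then x i * x j else 0)"
    if "i < s" for i
  proof -
    have "x i * Amat b a s i j * x j = b * (if j = i then x i * x j else 0)
       + a * (if j = Suc i mod s then x i * x j else 0) + a * (if i = Suc j mod s then x i * x j else 0)" for j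
      unfolding Amat_def by (simp add: distrib_left distrib_right)
    moreover have "Suc i mod s < s" using assms by simp
    ultimately show ?thesis using that
      by (simp only: sum.distrib sum_distrib_left[symmetric]) simp
  qed
  have "(\<Sum>i<s. \<Sum>j<s. if i = Suc j mod s then x i * x j else 0) = (\<Sum>j<s. x (Suc j mod s) * x j)"
    using assms by (subst sum.swap) simp
  with row show ?thesis
    unfolding quadA_def by (simp add: sum.distrib sum_distrib_left[symmetric] mult_ac)
qed

lemma quadA_lower_bound:
  assumes "0 < s" "0 \<le> a"
  shows "(b - 2 * a) * (\<Sum>i<s. x i * x i) \<le> quadA b a s x"
proof -
  let ?S = "\<Sum>i<s. x i * x i" and ?C = "\<Sum>i<s. x i * x (Suc i mod s)"
  have "0 \<le> (\<Sum>i<s. (x i + x (Suc i mod s)) * (x i + x (Suc i mod s)))"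
    by (intro sum_nonneg) simp
  also have "\<dots> = ?S + (\<Sum>i<s. x (Suc i mod s) * x (Suc i mod s)) + 2 * ?C"
    by (simp add: sum.distrib algebra_simps sum_distrib_left)
  also have "(\<Sum>i<s. x (Suc i mod s) * x (Suc i mod s)) = ?S"
    using sum_Suc_mod[OF assms(1), of "\<lambda>i. x i * x i"] by simp
  finally have "a * (- ?S) \<le> a * ?C"
    using assms(2) by (intro mult_left_mono) simp_all
  then show ?thesis
    using quadA_cyclic[OF assms(1), of b a x] by (simp add: algebra_simps)
qed

section \<open>Lebesgue measure on \<open>\<real>\<^sup>s\<close>\<close>

lemma measurable_Rn_component[measurable]: "(\<lambda>x. x i) \<in> borel_measurable (Rn s)"
proof (cases "i < s")
  case True
  then show ?thesis
    unfolding Rn_def by (simp add: measurable_component_singleton)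
next
  case False
  then have "x i = undefined" if "x \<in> space (Rn s)" for x
    using that by (auto simp: Rn_def space_PiM PiE_def extensional_def)
  then show ?thesis
    using measurable_cong[of "Rn s" "\<lambda>x. x i" "\<lambda>x. undefined" borel] by simp
qed

lemma borel_measurable_quadA[measurable]: "quadA b a s \<in> borel_measurable (Rn s)"
  unfolding quadA_def by measurable

lemma borel_measurable_phiN_scaled[measurable]:
  "(\<lambda>x. phiN b a s (\<lambda>k. r * x k)) \<in> borel_measurable (Rn s)"
proof -
  have [measurable]: "(cosh::real \<Rightarrow> real) \<in> borel_measurable borel"
    by (intro borel_measurable_continuous_onI continuous_intros)
  have "(\<lambda>x. phiN b a s (\<lambda>k. r * x k))
      = (\<lambda>x. r\<^sup>2 * quadA b a s x / 2 - (\<Sum>k<s. ln (cosh (r * (\<Sum>i<s. x i * Amat b a s i k)))))"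
    by (simp add: phiN_def quadA_scale Acol_scale Acol_def)
  then show ?thesis
    by simp
qed

lemma space_Rn: "space (Rn s) = PiE {0..<s} (\<lambda>_. UNIV)"
  unfolding Rn_def by (simp add: space_PiM)

lemma product_sigma_finite_lborel: "product_sigma_finite (\<lambda>_. lborel :: real measure)"
  unfolding product_sigma_finite_def by (auto intro: sigma_finite_lborel)

lemma sigma_finite_Rn: "sigma_finite_measure (Rn s)"
  unfolding Rn_def by (intro product_sigma_finite.sigma_finite product_sigma_finite_lborel) simp

lemma emeasure_space_Rn_nonzero: "emeasure (Rn s) (space (Rn s)) \<noteq> 0"
proof -
  interpret product_sigma_finite "\<lambda>_. lborel :: real measure"
    by (rule product_sigma_finite_lborel)
  have "emeasure (Rn s) (PiE {0..<s} (\<lambda>_. {0..1})) = (\<Prod>i\<in>{0..<s}. emeasure lborel {0..1::real})"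
    unfolding Rn_def by (intro emeasure_PiM) auto
  then have "emeasure (Rn s) (PiE {0..<s} (\<lambda>_. {0..1})) = 1"
    by simp
  moreover have "emeasure (Rn s) (PiE {0..<s} (\<lambda>_. {0..1})) \<le> emeasure (Rn s) (space (Rn s))"
    using sets.top[of "Rn s"] by (intro emeasure_mono) (auto simp: space_Rn)
  ultimately show ?thesis
    by auto
qed

lemma emeasure_lborel_translate:
  assumes "A \<in> sets lborel"
  shows "emeasure lborel ((\<lambda>t. c + t) -` A) = emeasure lborel (A :: real set)"
  using emeasure_distr[of "(+) c" lborel borel A] assms by (simp add: lborel_distr_plus)

lemma measurable_Rn_diff[measurable]:
  assumes "f \<in> measurable M (Rn s)" "h \<in> measurable M (Rn s)"
  shows "(\<lambda>z. \<lambda>i\<in>{0..<s}. f z i - h z i) \<in> measurable M (Rn s)"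
proof -
  have "(\<lambda>z. f z i) \<in> borel_measurable M" "(\<lambda>z. h z i) \<in> borel_measurable M" for i
    using measurable_compose[OF assms(1) measurable_Rn_component] measurable_compose[OF assms(2) measurable_Rn_component]
    by simp_all
  then show ?thesis
    unfolding Rn_def by (intro measurable_restrict) (simp add: measurable_lborel2 borel_measurable_diff)
qed

lemma measurable_Rn_translate: "(\<lambda>y. \<lambda>i\<in>{0..<s}. v i + y i) \<in> measurable (Rn s) (Rn s)"
  unfolding Rn_def by measurable

lemma distr_Rn_translate: "distr (Rn s) (Rn s) (\<lambda>y. \<lambda>i\<in>{0..<s}. v i + y i) = Rn s"
proof -
  interpret product_sigma_finite "\<lambda>_. lborel :: real measure"
    by (rule product_sigma_finite_lborel)
  let ?T = "\<lambda>y. \<lambda>i\<in>{0..<s}. v i + y i"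
  show ?thesis unfolding Rn_def
  proof (rule PiM_eqI)
    fix A :: "nat \<Rightarrow> real set"
    assume A: "\<And>i. i \<in> {0..<s} \<Longrightarrow> A i \<in> sets lborel"
    have "?T -` PiE {0..<s} A \<inter> space (PiM {0..<s} (\<lambda>_. lborel))
        = PiE {0..<s} (\<lambda>i. (\<lambda>t. v i + t) -` A i)"
      by (auto simp: space_PiM PiE_def Pi_def extensional_def)
    then have "emeasure (distr (PiM {0..<s} (\<lambda>_. lborel)) (PiM {0..<s} (\<lambda>_. lborel)) ?T) (PiE {0..<s} A)
        = emeasure (PiM {0..<s} (\<lambda>_. lborel)) (PiE {0..<s} (\<lambda>i. (\<lambda>t. v i + t) -` A i))"
      using measurable_Rn_translate[of v s] A
      by (subst emeasure_distr) (auto simp: Rn_def sets_PiM_I_finite)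
    also have "\<dots> = (\<Prod>i\<in>{0..<s}. emeasure lborel ((\<lambda>t. v i + t) -` A i))"
      using A by (intro emeasure_PiM) (auto intro: measurable_sets_borel[of "(+) _" borel])
    also have "\<dots> = (\<Prod>i\<in>{0..<s}. emeasure lborel (A i))"
      using A by (intro prod.cong refl emeasure_lborel_translate) auto
    finally show "emeasure (distr (PiM {0..<s} (\<lambda>_. lborel)) (PiM {0..<s} (\<lambda>_. lborel)) ?T) (PiE {0..<s} A)
        = (\<Prod>i\<in>{0..<s}. emeasure lborel (A i))" .
  qed simp_all
qed

lemma nn_integral_Rn_translate:
  assumes "h \<in> borel_measurable (Rn s)"
  shows "(\<integral>\<^sup>+ y. h (\<lambda>i\<in>{0..<s}. v i + y i) \<partial>Rn s) = (\<integral>\<^sup>+ x. h x \<partial>Rn s)"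
proof -
  have "(\<integral>\<^sup>+ x. h x \<partial>Rn s) = (\<integral>\<^sup>+ x. h x \<partial>distr (Rn s) (Rn s) (\<lambda>y. \<lambda>i\<in>{0..<s}. v i + y i))"
    by (simp add: distr_Rn_translate)
  also have "\<dots> = (\<integral>\<^sup>+ y. h (\<lambda>i\<in>{0..<s}. v i + y i) \<partial>Rn s)"
    using assms by (intro nn_integral_distr measurable_Rn_translate) auto
  finally show ?thesis
    by simp
qed

lemma measurable_Rn_shift: "(\<lambda>x. \<lambda>i\<in>{0..<s}. x i - v i) \<in> measurable (Rn s) (Rn s)"
  unfolding Rn_def by measurable

lemma measurable_Rn_reflect: "(\<lambda>v. \<lambda>i\<in>{0..<s}. x i - v i) \<in> measurable (Rn s) (Rn s)"
  unfolding Rn_def by measurable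

lemma nn_integral_Rn_shift:
  assumes "h \<in> borel_measurable (Rn s)" "F \<in> borel_measurable (Rn s)"
  shows "(\<integral>\<^sup>+ y. h y * F (\<lambda>i\<in>{0..<s}. v i + y i) \<partial>Rn s)
    = (\<integral>\<^sup>+ x. h (\<lambda>i\<in>{0..<s}. x i - v i) * F x \<partial>Rn s)"
proof -
  have "(\<lambda>i\<in>{0..<s}. (\<lambda>i\<in>{0..<s}. v i + y i) i - v i) = y" if "y \<in> space (Rn s)" for y
    using that by (auto simp: space_Rn PiE_def extensional_def)
  then have "(\<integral>\<^sup>+ y. h y * F (\<lambda>i\<in>{0..<s}. v i + y i) \<partial>Rn s)
      = (\<integral>\<^sup>+ y. (\<lambda>x. h (\<lambda>i\<in>{0..<s}. x i - v i) * F x) (\<lambda>i\<in>{0..<s}. v i + y i) \<partial>Rn s)"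
    by (intro nn_integral_cong) simp
  also have "\<dots> = (\<integral>\<^sup>+ x. h (\<lambda>i\<in>{0..<s}. x i - v i) * F x \<partial>Rn s)"
    using measurable_compose[OF measurable_Rn_shift assms(1)] assms(2)
    by (intro nn_integral_Rn_translate borel_measurable_times_ennreal) simp_all
  finally show ?thesis .
qed

section \<open>The Gaussian measure\<close>

lemma integrable_exp_neg_square:
  assumes "0 < c"
  shows "integrable lborel (\<lambda>t::real. exp (- c / 2 * t\<^sup>2))"
proof -
  let ?\<sigma> = "1 / sqrt c"
  have "sqrt (2 * pi * ?\<sigma>\<^sup>2) * normal_density 0 ?\<sigma> t = exp (- c / 2 * t\<^sup>2)" for t
    using assms by (simp add: normal_density_def field_simps)
  moreover have "integrable lborel (\<lambda>t. sqrt (2 * pi * ?\<sigma>\<^sup>2) * normal_density 0 ?\<sigma> t)"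
    using assms by (intro integrable_mult_right integrable_normal_density) simp
  ultimately show ?thesis
    by simp
qed

lemma integrable_exp_neg_quadA:
  assumes "0 < s" "0 \<le> a" "2 * a < b"
  shows "integrable (Rn s) (\<lambda>x. exp (- quadA b a s x / 2))"
proof (rule Bochner_Integration.integrable_bound)
  let ?c = "b - 2 * a"
  interpret product_sigma_finite "\<lambda>_. lborel :: real measure"
    by (rule product_sigma_finite_lborel)
  show "integrable (Rn s) (\<lambda>x. \<Prod>i\<in>{0..<s}. exp (- ?c / 2 * (x i)\<^sup>2))"
    unfolding Rn_def using assms by (intro product_integrable_prod integrable_exp_neg_square) auto
  show "AE x in Rn s. norm (exp (- quadA b a s x / 2)) \<le> norm (\<Prod>i\<in>{0..<s}. exp (- ?c / 2 * (x i)\<^sup>2))"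
  proof (intro AE_I2)
    fix x
    have "(\<Prod>i\<in>{0..<s}. exp (- ?c / 2 * (x i)\<^sup>2)) = exp (- ?c / 2 * (\<Sum>i<s. x i * x i))"
      by (simp add: exp_sum[symmetric] sum_distrib_left atLeast0LessThan power2_eq_square)
    moreover have "exp (- quadA b a s x / 2) \<le> exp (- ?c / 2 * (\<Sum>i<s. x i * x i))"
      using quadA_lower_bound[OF assms(1,2), of b x] by (simp add: algebra_simps)
    ultimately show "norm (exp (- quadA b a s x / 2)) \<le> norm (\<Prod>i\<in>{0..<s}. exp (- ?c / 2 * (x i)\<^sup>2))"
      by (simp add: prod_nonneg)
  qed
qed simp

lemma integral_exp_neg_quadA_pos:
  assumes "0 < s" "0 \<le> a" "2 * a < b"
  shows "0 < (\<integral>y. exp (- quadA b a s y / 2) \<partial>Rn s)"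
proof -
  have "(\<integral>y. exp (- quadA b a s y / 2) \<partial>Rn s) \<noteq> 0"
  proof
    assume "(\<integral>y. exp (- quadA b a s y / 2) \<partial>Rn s) = 0"
    then have "AE y in Rn s. False"
      using integral_nonneg_eq_0_iff_AE[OF integrable_exp_neg_quadA[OF assms]] by simp
    then show False
      using emeasure_space_Rn_nonzero[of s] by (simp add: ae_filter_eq_bot_iff)
  qed
  then show ?thesis
    by (simp add: order_less_le)
qed

lemma prob_space_gauss:
  assumes "0 < s" "0 \<le> a" "2 * a < b"
  shows "prob_space (gauss b a s)"
proof (rule prob_spaceI)
  let ?G = "\<integral>y. exp (- quadA b a s y / 2) \<partial>Rn s"
  have "emeasure (gauss b a s) (space (gauss b a s)) = (\<integral>\<^sup>+ y. ennreal (exp (- quadA b a s y / 2) / ?G) \<partial>Rn s)"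
    unfolding gauss_def by (subst emeasure_density) (auto intro!: nn_integral_cong)
  also have "\<dots> = ennreal (\<integral>y. exp (- quadA b a s y / 2) / ?G \<partial>Rn s)"
    using integrable_exp_neg_quadA[OF assms] integral_exp_neg_quadA_pos[OF assms]
    by (intro nn_integral_eq_integral) auto
  also have "\<dots> = 1"
    using integral_exp_neg_quadA_pos[OF assms] by simp
  finally show "emeasure (gauss b a s) (space (gauss b a s)) = 1" .
qed

section \<open>Convolution\<close>

lemma conv_density:
  fixes g :: "(nat \<Rightarrow> real) \<Rightarrow> real"
  assumes \<mu>: "sigma_finite_measure \<mu>" and sets_\<mu>[measurable_cong]: "sets \<mu> = sets (Rn s)"
    and g[measurable]: "g \<in> borel_measurable (Rn s)"
  shows "conv s \<mu> (density (Rn s) g)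
    = density (Rn s) (\<lambda>x. \<integral>\<^sup>+ v. ennreal (g (\<lambda>i\<in>{0..<s}. x i - v i)) \<partial>\<mu>)"
proof (rule measure_eqI)
  let ?\<gamma> = "density (Rn s) g" and ?T = "\<lambda>(v, y). \<lambda>i\<in>{0..<s}. v i + y i"
  interpret Rn: sigma_finite_measure "Rn s"
    by (rule sigma_finite_Rn)
  interpret \<gamma>: sigma_finite_measure ?\<gamma>
    by (subst Rn.sigma_finite_iff_density_finite) auto
  interpret pair_sigma_finite \<mu> "Rn s"
    using \<mu> by (simp add: pair_sigma_finite_def sigma_finite_Rn)
  have [measurable]: "?T \<in> measurable (\<mu> \<Otimes>\<^sub>M ?\<gamma>) (Rn s)"
    unfolding Rn_def by measurable
  have shifted_g: "(\<lambda>z. g (\<lambda>i\<in>{0..<s}. snd z i - fst z i)) \<in> borel_measurable (\<mu> \<Otimes>\<^sub>M Rn s)"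
    using measurable_compose[OF measurable_Rn_diff[of snd _ s fst] g] by simp
  have reflected_g: "(\<lambda>v. ennreal (g (\<lambda>i\<in>{0..<s}. x i - v i))) \<in> borel_measurable \<mu>" for x
    using measurable_Rn_reflect[of x s] unfolding measurable_cong_sets[OF sets_\<mu> refl] by measurable
  show "sets (conv s \<mu> ?\<gamma>) = sets (density (Rn s) (\<lambda>x. \<integral>\<^sup>+ v. ennreal (g (\<lambda>i\<in>{0..<s}. x i - v i)) \<partial>\<mu>))"
    by (simp add: conv_def)
  fix B
  assume "B \<in> sets (conv s \<mu> ?\<gamma>)"
  moreover from this have B[measurable]: "B \<in> sets (Rn s)"
    by (simp add: conv_def)
  have integrand_measurable:
    "(\<lambda>(v, x). ennreal (g (\<lambda>i\<in>{0..<s}. x i - v i)) * indicator B x) \<in> borel_measurable (\<mu> \<Otimes>\<^sub>M Rn s)"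
    using shifted_g by (simp add: case_prod_beta')
  ultimately have "emeasure (conv s \<mu> ?\<gamma>) B = (\<integral>\<^sup>+ z. indicator B z \<partial>conv s \<mu> ?\<gamma>)"
    by simp
  also have "\<dots> = (\<integral>\<^sup>+ z. indicator B (?T z) \<partial>(\<mu> \<Otimes>\<^sub>M ?\<gamma>))"
    unfolding conv_def by (intro nn_integral_distr) measurable
  also have "\<dots> = (\<integral>\<^sup>+ v. \<integral>\<^sup>+ y. ennreal (g y) * indicator B (\<lambda>i\<in>{0..<s}. v i + y i) \<partial>Rn s \<partial>\<mu>)"
    by (subst \<gamma>.nn_integral_fst[symmetric]) (auto intro!: nn_integral_cong simp: nn_integral_density)
  also have "\<dots> = (\<integral>\<^sup>+ v. \<integral>\<^sup>+ x. ennreal (g (\<lambda>i\<in>{0..<s}. x i - v i)) * indicator B x \<partial>Rn s \<partial>\<mu>)"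
    by (rule nn_integral_cong, rule nn_integral_Rn_shift) measurable
  also have "\<dots> = (\<integral>\<^sup>+ x. \<integral>\<^sup>+ v. ennreal (g (\<lambda>i\<in>{0..<s}. x i - v i)) * indicator B x \<partial>\<mu> \<partial>Rn s)"
    using integrand_measurable by (rule Fubini'[symmetric])
  also have "\<dots> = (\<integral>\<^sup>+ x. (\<integral>\<^sup>+ v. ennreal (g (\<lambda>i\<in>{0..<s}. x i - v i)) \<partial>\<mu>) * indicator B x \<partial>Rn s)"
    using reflected_g by (intro nn_integral_cong nn_integral_multc)
  also have "\<dots> = emeasure (density (Rn s) (\<lambda>x. \<integral>\<^sup>+ v. ennreal (g (\<lambda>i\<in>{0..<s}. x i - v i)) \<partial>\<mu>)) B"
    by (simp add: emeasure_density)
  finally show "emeasure (conv s \<mu> ?\<gamma>) B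
      = emeasure (density (Rn s) (\<lambda>x. \<integral>\<^sup>+ v. ennreal (g (\<lambda>i\<in>{0..<s}. x i - v i)) \<partial>\<mu>)) B" .
qed

lemma prob_space_conv:
  assumes "prob_space M1" "prob_space M2"
    and [measurable_cong]: "sets M1 = sets (Rn s)" "sets M2 = sets (Rn s)"
  shows "prob_space (conv s M1 M2)"
proof -
  interpret pair_prob_space M1 M2
    using assms(1,2) by (simp add: pair_prob_space_def pair_sigma_finite_def prob_space_imp_sigma_finite)
  have "(\<lambda>(x, y). \<lambda>i\<in>{0..<s}. x i + y i) \<in> measurable (M1 \<Otimes>\<^sub>M M2) (Rn s)"
    unfolding Rn_def by measurable
  then show ?thesis
    unfolding conv_def by (rule prob_space_distr)
qed

section \<open>Sums over spin configurations\<close>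

lemma finite_spins: "finite (spins N)"
  unfolding spins_def by (simp add: finite_PiE)

lemma spins_nonempty: "spins N \<noteq> {}"
  unfolding spins_def by (simp add: PiE_eq_empty_iff)

lemma sum_spins_exp_linear:
  "(\<Sum>\<sigma>\<in>spins N. 2 powr (- real N) * exp (\<Sum>i<N. t i * \<sigma> i)) = (\<Prod>i<N. cosh (t i))"
proof -
  have "(\<Sum>\<sigma>\<in>spins N. exp (\<Sum>i<N. t i * \<sigma> i)) = (\<Sum>\<sigma>\<in>spins N. \<Prod>i\<in>{0..<N}. exp (t i * \<sigma> i))"
    by (simp add: exp_sum atLeast0LessThan)
  also have "\<dots> = (\<Prod>i\<in>{0..<N}. \<Sum>y\<in>{-1, 1}. exp (t i * y))"
    unfolding spins_def by (rule prod_sum_PiE[symmetric]) auto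
  also have "\<dots> = (\<Prod>i\<in>{0..<N}. 2 * cosh (t i))"
    by (intro prod.cong refl) (simp add: cosh_def)
  also have "\<dots> = 2 ^ N * (\<Prod>i<N. cosh (t i))"
    by (simp add: prod.distrib atLeast0LessThan)
  finally show ?thesis
    by (simp add: sum_distrib_left[symmetric] powr_minus powr_realpow)
qed

lemma nat_div_eq_iff: "0 < (b::nat) \<Longrightarrow> i div b = k \<longleftrightarrow> k * b \<le> i \<and> i < Suc k * b"
  using div_less_iff_less_mult[of b i "Suc k"] less_eq_div_iff_mult_less_eq[of b k i]
  by (auto simp: mult.commute)

lemma card_block:
  assumes "0 < b" "k < s"
  shows "card {i. i < s * b \<and> i div b = k} = b"
proof -
  have "Suc k * b \<le> s * b"
    using assms(2) by (intro mult_le_mono1) simp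
  then have "{i. i < s * b \<and> i div b = k} = {k * b..<Suc k * b}"
    using nat_div_eq_iff[OF assms(1)] by auto
  then show ?thesis
    by simp
qed

lemma div_in_blocks: "(\<lambda>i. i div b) ` {..<s * b} \<subseteq> {..<s::nat}"
  by (cases "b = 0") (auto simp: div_less_iff_less_mult)

lemma sum_blocks:
  fixes h :: "nat \<Rightarrow> 'a::comm_monoid_add"
  shows "(\<Sum>k<s. \<Sum>i\<in>{i. i < s * b \<and> i div b = k}. h i) = (\<Sum>i<s * b. h i)"
  using sum.group[OF _ _ div_in_blocks[of b s], where h = h] by simp

lemma prod_blocks:
  fixes h :: "nat \<Rightarrow> 'a::comm_monoid_mult"
  assumes "0 < b"
  shows "(\<Prod>i<s * b. h (i div b)) = (\<Prod>k<s. h k ^ b)"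
proof -
  have "(\<Prod>i<s * b. h (i div b)) = (\<Prod>k<s. \<Prod>i\<in>{i. i < s * b \<and> i div b = k}. h (i div b))"
    using prod.group[OF _ _ div_in_blocks[of b s], where h = "\<lambda>i. h (i div b)"] by simp
  also have "\<dots> = (\<Prod>k<s. h k ^ b)"
  proof (rule prod.cong)
    fix k
    assume "k \<in> {..<s}"
    then show "(\<Prod>i\<in>{i. i < s * b \<and> i div b = k}. h (i div b)) = h k ^ b"
      using card_block[OF assms, of k s] by simp
  qed simp
  finally show ?thesis .
qed

lemma sum_mult_magn:
  assumes "0 < s" "0 < b"
  shows "(\<Sum>k<s. a k * magn (s * b) s \<sigma> k) = (\<Sum>i<s * b. a (i div b) * \<sigma> i) / real b"
proof -
  have "(\<Sum>k<s. a k * magn (s * b) s \<sigma> k) = (\<Sum>k<s. \<Sum>i\<in>{i. i < s * b \<and> i div b = k}. a (i div b) * \<sigma> i) / real b"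
    using assms by (simp add: magn_def sum_distrib_left sum_divide_distrib)
  also have "\<dots> = (\<Sum>i<s * b. a (i div b) * \<sigma> i) / real b"
    by (simp only: sum_blocks)
  finally show ?thesis .
qed

lemma sum_gibbs_weight_gauss_kernel:
  assumes "0 < s" "0 < b" "N = s * b"
  shows "(\<Sum>\<sigma>\<in>spins N. gibbs_weight \<beta> \<alpha> N s \<sigma> *
            exp (- quadA \<beta> \<alpha> s (\<lambda>i. x i - sqrt (real N / real s) * magn N s \<sigma> i) / 2))
       = exp (- (real N / real s) * phiN \<beta> \<alpha> s (\<lambda>k. sqrt (real s / real N) * x k))"
proof -
  define c where "c = 1 / sqrt (real b)"
  define a where "a = Acol \<beta> \<alpha> s x"
  define q where "q = quadA \<beta> \<alpha> s x"
  define L where "L = (\<lambda>\<sigma>. \<Sum>i<N. c * a (i div b) * \<sigma> i)"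
  have Ns: "real N / real s = real b" "sqrt (real s / real N) = c"
    using assms by (simp_all add: c_def real_sqrt_divide)
  have c_eq: "c = sqrt (real b) / real b"
    using assms(2) by (simp add: c_def field_simps)
  have linear_part: "(\<Sum>k<s. a k * (sqrt (real b) * magn N s \<sigma> k)) = L \<sigma>" for \<sigma>
  proof -
    have "(\<Sum>k<s. a k * (sqrt (real b) * magn N s \<sigma> k)) = (\<Sum>i<N. sqrt (real b) * a (i div b) * \<sigma> i) / real b"
      using sum_mult_magn[OF assms(1,2), of "\<lambda>k. sqrt (real b) * a k" \<sigma>] assms(3)
      by (simp add: mult_ac sum_distrib_left)
    then show ?thesis
      by (simp add: L_def c_eq sum_divide_distrib)
  qed
  have summand: "gibbs_weight \<beta> \<alpha> N s \<sigma> * exp (- quadA \<beta> \<alpha> s (\<lambda>i. x i - sqrt (real b) * magn N s \<sigma> i) / 2)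
      = exp (- q / 2) * (2 powr (- real N) * exp (L \<sigma>))" for \<sigma>
    unfolding gibbs_weight_def quadA_diff quadA_scale linear_part[symmetric] q_def a_def
    using assms(1,3) by (simp add: exp_add[symmetric] exp_diff field_simps)
  have "(\<Sum>\<sigma>\<in>spins N. gibbs_weight \<beta> \<alpha> N s \<sigma> * exp (- quadA \<beta> \<alpha> s (\<lambda>i. x i - sqrt (real b) * magn N s \<sigma> i) / 2))
      = exp (- q / 2) * (\<Prod>i<N. cosh (c * a (i div b)))"
    unfolding summand L_def sum_spins_exp_linear[symmetric] by (simp add: sum_distrib_left)
  also have "\<dots> = exp (- q / 2) * (\<Prod>k<s. exp (real b * ln (cosh (c * a k))))"
    using prod_blocks[OF assms(2), of "\<lambda>k. cosh (c * a k)" s] assms(3) by (simp add: exp_of_nat_mult)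
  also have "\<dots> = exp (- (real N / real s) * phiN \<beta> \<alpha> s (\<lambda>k. c * x k))"
    using assms(2) unfolding phiN_def quadA_scale Acol_scale Ns q_def[symmetric] a_def[symmetric]
    by (simp add: c_def exp_add[symmetric] exp_sum[symmetric] sum_distrib_left field_simps)
  finally show ?thesis
    by (simp only: Ns)
qed

section \<open>The Gibbs measure and the law of the magnetisation\<close>

lemma gibbs_weight_pos: "0 < gibbs_weight \<beta> \<alpha> N s \<sigma>"
  unfolding gibbs_weight_def by simp

lemma gibbs_Z_pos: "0 < gibbs_Z \<beta> \<alpha> N s"
  unfolding gibbs_Z_def using finite_spins spins_nonempty gibbs_weight_pos by (intro sum_pos)

lemma nn_integral_gibbs:
  "(\<integral>\<^sup>+ \<sigma>. h \<sigma> \<partial>gibbs \<beta> \<alpha> N s)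
    = (\<Sum>\<sigma>\<in>spins N. ennreal (gibbs_weight \<beta> \<alpha> N s \<sigma> / gibbs_Z \<beta> \<alpha> N s) * h \<sigma>)"
  unfolding gibbs_def by (simp add: nn_integral_density nn_integral_count_space_finite finite_spins)

lemma prob_space_gibbs: "prob_space (gibbs \<beta> \<alpha> N s)"
proof (rule prob_spaceI)
  have "emeasure (gibbs \<beta> \<alpha> N s) (space (gibbs \<beta> \<alpha> N s)) = (\<integral>\<^sup>+ \<sigma>. 1 \<partial>gibbs \<beta> \<alpha> N s)"
    by simp
  also have "\<dots> = ennreal (\<Sum>\<sigma>\<in>spins N. gibbs_weight \<beta> \<alpha> N s \<sigma> / gibbs_Z \<beta> \<alpha> N s)"
    unfolding nn_integral_gibbs using gibbs_weight_pos gibbs_Z_pos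
    by (simp add: sum_ennreal less_imp_le)
  also have "\<dots> = 1"
    using gibbs_Z_pos[of \<beta> \<alpha> N s] by (simp add: sum_divide_distrib[symmetric] gibbs_Z_def)
  finally show "emeasure (gibbs \<beta> \<alpha> N s) (space (gibbs \<beta> \<alpha> N s)) = 1" .
qed

lemma measurable_scaled_magn:
  "(\<lambda>\<sigma>. \<lambda>k\<in>{0..<s}. r * magn N s \<sigma> k) \<in> measurable (gibbs \<beta> \<alpha> N s) (Rn s)"
  unfolding gibbs_def by (simp add: space_Rn)

lemma nn_integral_magn_law:
  assumes "h \<in> borel_measurable (Rn s)"
  shows "(\<integral>\<^sup>+ v. h v \<partial>magn_law \<beta> \<alpha> N s)
    = (\<Sum>\<sigma>\<in>spins N. ennreal (gibbs_weight \<beta> \<alpha> N s \<sigma> / gibbs_Z \<beta> \<alpha> N s)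
                    * h (\<lambda>k\<in>{0..<s}. sqrt (real N / real s) * magn N s \<sigma> k))"
  unfolding magn_law_def using assms measurable_scaled_magn
  by (simp add: nn_integral_distr nn_integral_gibbs)

lemma prob_space_magn_law: "prob_space (magn_law \<beta> \<alpha> N s)"
  unfolding magn_law_def using prob_space_gibbs measurable_scaled_magn by (rule prob_space.prob_space_distr)

lemma nn_integral_magn_law_gauss_kernel:
  assumes "0 < s" "0 < b" "N = s * b" "0 < G"
  shows "(\<integral>\<^sup>+ v. ennreal (exp (- quadA \<beta> \<alpha> s (\<lambda>i\<in>{0..<s}. x i - v i) / 2) / G) \<partial>magn_law \<beta> \<alpha> N s)
    = ennreal (exp (- (real N / real s) * phiN \<beta> \<alpha> s (\<lambda>k. sqrt (real s / real N) * x k))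
               / (gibbs_Z \<beta> \<alpha> N s * G))"
proof -
  let ?w = "gibbs_weight \<beta> \<alpha> N s" and ?Z = "gibbs_Z \<beta> \<alpha> N s"
  let ?K = "\<lambda>\<sigma>. exp (- quadA \<beta> \<alpha> s (\<lambda>i. x i - sqrt (real N / real s) * magn N s \<sigma> i) / 2)"
  have "(\<lambda>v. quadA \<beta> \<alpha> s (\<lambda>i\<in>{0..<s}. x i - v i)) \<in> borel_measurable (Rn s)"
    using measurable_compose[OF measurable_Rn_reflect borel_measurable_quadA] by simp
  then have "(\<lambda>v. ennreal (exp (- quadA \<beta> \<alpha> s (\<lambda>i\<in>{0..<s}. x i - v i) / 2) / G)) \<in> borel_measurable (Rn s)"
    by measurable
  moreover have "quadA \<beta> \<alpha> s (\<lambda>i\<in>{0..<s}. x i - (\<lambda>k\<in>{0..<s}. sqrt (real N / real s) * magn N s \<sigma> k) i)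
      = quadA \<beta> \<alpha> s (\<lambda>i. x i - sqrt (real N / real s) * magn N s \<sigma> i)" for \<sigma>
    by (rule quadA_cong) simp
  ultimately have "(\<integral>\<^sup>+ v. ennreal (exp (- quadA \<beta> \<alpha> s (\<lambda>i\<in>{0..<s}. x i - v i) / 2) / G) \<partial>magn_law \<beta> \<alpha> N s)
      = (\<Sum>\<sigma>\<in>spins N. ennreal (?w \<sigma> / ?Z) * ennreal (?K \<sigma> / G))"
    by (simp only: nn_integral_magn_law)
  also have "\<dots> = ennreal ((\<Sum>\<sigma>\<in>spins N. ?w \<sigma> * ?K \<sigma>) / (?Z * G))"
    using gibbs_weight_pos gibbs_Z_pos assms(4)
    by (simp add: ennreal_mult[symmetric] sum_ennreal sum_divide_distrib less_imp_le)
  also have "\<dots> = ennreal (exp (- (real N / real s) * phiN \<beta> \<alpha> s (\<lambda>k. sqrt (real s / real N) * x k))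
      / (?Z * G))"
    unfolding sum_gibbs_weight_gauss_kernel[OF assms(1-3)] ..
  finally show ?thesis .
qed

lemma integral_eq_normalizer:
  fixes f :: "'a \<Rightarrow> real"
  assumes "prob_space (density M (\<lambda>x. ennreal (f x / c)))" "0 < c"
    and "f \<in> borel_measurable M" "\<And>x. 0 \<le> f x"
  shows "integral\<^sup>L M f = c"
proof -
  have "(\<integral>\<^sup>+ x. ennreal (f x / c) \<partial>M) = 1"
    using prob_space.emeasure_space_1[OF assms(1)] assms(3) by (simp add: emeasure_density)
  then have "(\<integral>\<^sup>+ x. ennreal (f x) \<partial>M) = ennreal c"
    using assms(2-4) nn_integral_cmult[of "\<lambda>x. ennreal (f x / c)" M "ennreal c"]
    by (simp add: ennreal_mult[symmetric])
  then show ?thesis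
    using assms(2-4) by (simp add: integral_eq_nn_integral)
qed

lemma conv_magn_law_gauss:
  assumes "0 < s" "0 < b" "N = s * b" "0 \<le> \<alpha>" "2 * \<alpha> < \<beta>"
  shows "conv s (magn_law \<beta> \<alpha> N s) (gauss \<beta> \<alpha> s)
    = density (Rn s) (\<lambda>x. ennreal (exp (- (real N / real s) * phiN \<beta> \<alpha> s (\<lambda>k. sqrt (real s / real N) * x k))
        / (gibbs_Z \<beta> \<alpha> N s * (\<integral>y. exp (- quadA \<beta> \<alpha> s y / 2) \<partial>Rn s))))"
proof -
  define G where "G = (\<integral>y. exp (- quadA \<beta> \<alpha> s y / 2) \<partial>Rn s)"
  have G: "0 < G"
    unfolding G_def using integral_exp_neg_quadA_pos[OF assms(1,4,5)] .
  have "conv s (magn_law \<beta> \<alpha> N s) (gauss \<beta> \<alpha> s)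
      = density (Rn s) (\<lambda>x. \<integral>\<^sup>+ v. ennreal (exp (- quadA \<beta> \<alpha> s (\<lambda>i\<in>{0..<s}. x i - v i) / 2) / G)
                                 \<partial>magn_law \<beta> \<alpha> N s)"
    unfolding gauss_def G_def[symmetric]
    using prob_space_imp_sigma_finite[OF prob_space_magn_law] by (rule conv_density) (simp_all add: magn_law_def)
  then show ?thesis
    unfolding nn_integral_magn_law_gauss_kernel[OF assms(1-3) G] by (simp only: G_def)
qed

lemma zN_eq:
  assumes "0 < s" "0 < b" "N = s * b" "0 \<le> \<alpha>" "2 * \<alpha> < \<beta>"
  shows "zN \<beta> \<alpha> N s = gibbs_Z \<beta> \<alpha> N s * (\<integral>y. exp (- quadA \<beta> \<alpha> s y / 2) \<partial>Rn s)"
proof -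
  have "prob_space (conv s (magn_law \<beta> \<alpha> N s) (gauss \<beta> \<alpha> s))"
    using prob_space_magn_law prob_space_gauss[OF assms(1,4,5)]
    by (rule prob_space_conv) (simp_all add: magn_law_def gauss_def)
  moreover have "0 < gibbs_Z \<beta> \<alpha> N s * (\<integral>y. exp (- quadA \<beta> \<alpha> s y / 2) \<partial>Rn s)"
    using gibbs_Z_pos integral_exp_neg_quadA_pos[OF assms(1,4,5)] by (rule mult_pos_pos)
  ultimately show ?thesis
    unfolding zN_def conv_magn_law_gauss[OF assms] by (rule integral_eq_normalizer) simp_all
qed

theorem lemma4p1:
  fixes \<beta> \<alpha> :: real and sN :: "nat \<Rightarrow> nat" and N :: nat
  assumes "0 < \<alpha>" and "2 * \<alpha> < \<beta>"
    and "mono sN" and "\<And>n. 0 < sN n" and "\<And>n. sN n dvd n"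
    and "0 < N"
  shows "conv (sN N) (magn_law \<beta> \<alpha> N (sN N)) (gauss \<beta> \<alpha> (sN N)) =
         density (Rn (sN N))
           (\<lambda>x. ennreal (exp (- (real N / real (sN N)) *
                   phiN \<beta> \<alpha> (sN N) (\<lambda>k. sqrt (real (sN N) / real N) * x k))
                 / zN \<beta> \<alpha> N (sN N)))"
proof -
  define s where "s = sN N"
  obtain b where N: "N = s * b"
    using assms(5)[of N] unfolding s_def by (auto elim: dvdE)
  have s: "0 < s"
    using assms(4) unfolding s_def by simp
  have b: "0 < b"
    using N assms(6) by (simp add: gr0I)
  have "0 \<le> \<alpha>"
    using assms(1) by simp
  with s b N assms(2) show ?thesis
    unfolding s_def[symmetric] by (simp only: conv_magn_law_gauss zN_eq)
qed

end
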